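(* Let $s$ be a Lucasian GNS on a ring $D$ and let $\mathcal F$ be a set of positive integers stable under taking divisors. Suppose that for all positive integers $a,b$ with $\ell=\operatorname{lcm}(a,b)\in\mathcal F$ one has $s(\ell)\equiv \frac{s(a)s(b)}{s(g)}\bmod s(a)s(b)$, where $g=\gcd(a,b)$. Then $s$ is $\mathcal F$-Green.
   Context: A GNS over $D$ is $s\colon\mathbf N\to D$ with $s(0)=0$, $s(n)$ a non-zero-divisor for $n>0$, and $s(n-k)\mid s(n)-s(k)$ for $n>k>0$. It is Lucasian if $s(a+b)\equiv s(a)+s(b)\bmod s(a)s(b)$. It is $\mathcal F$-Green if for all $m\in\mathcal F$ and all $a,b\mid m$, with $g=\gcd(a,b)$, $\ell=\operatorname{lcm}(a,b)$, one has $s(m)\equiv\frac m\ell\frac{s(a)s(b)}{s(g)}\bmod s(a)s(b)$ (the quotient $s(a)s(b)/s(g)$ being an element of $D$). *)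

theory Defs
  imports Main
begin

definition non_zero_divisor :: "'a::comm_ring_1 \<Rightarrow> bool" where
  "non_zero_divisor x \<longleftrightarrow> (\<forall>y. x * y = 0 \<longrightarrow> y = 0)"

definition ring_cong :: "'a::comm_ring_1 \<Rightarrow> 'a \<Rightarrow> 'a \<Rightarrow> bool" where
  "ring_cong x y m \<longleftrightarrow> m dvd (x - y)"

definition GNS :: "(nat \<Rightarrow> 'a::comm_ring_1) \<Rightarrow> bool" where
  "GNS s \<longleftrightarrow> s 0 = 0 \<and> (\<forall>n>0. non_zero_divisor (s n))
     \<and> (\<forall>n k. 0 < k \<and> k < n \<longrightarrow> s (n - k) dvd (s n - s k))"

definition Lucasian :: "(nat \<Rightarrow> 'a::comm_ring_1) \<Rightarrow> bool" where
  "Lucasian s \<longleftrightarrow> (\<forall>a b. ring_cong (s (a + b)) (s a + s b) (s a * s b))"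

text \<open>The quotient s(a)s(b)/s(g) in D (well defined since s(g) is a non-zero-divisor).\<close>
definition gns_quot :: "(nat \<Rightarrow> 'a::comm_ring_1) \<Rightarrow> nat \<Rightarrow> nat \<Rightarrow> 'a" where
  "gns_quot s a b = (THE q. s (gcd a b) * q = s a * s b)"

definition F_Green :: "nat set \<Rightarrow> (nat \<Rightarrow> 'a::comm_ring_1) \<Rightarrow> bool" where
  "F_Green F s \<longleftrightarrow> (\<forall>m\<in>F. \<forall>a b. a dvd m \<and> b dvd m \<longrightarrow>
     ring_cong (s m) (of_nat (m div lcm a b) * gns_quot s a b) (s a * s b))"

end

theory Submission
  imports Defs
begin

text \<open>Iterating the Lucasian congruence gives \<open>s(j l) \<equiv> j s(l) mod s(l)\<^sup>2\<close>. For \<open>a, b\<close> dividing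
  \<open>m\<close> put \<open>l = lcm a b\<close>; then \<open>s(a)\<close> and \<open>s(b)\<close> divide \<open>s(l)\<close>, so \<open>s(a)s(b)\<close> divides \<open>s(l)\<^sup>2\<close>, and
  \<open>s(m) \<equiv> (m/l) s(l) \<equiv> (m/l) s(a)s(b)/s(g) mod s(a)s(b)\<close> by the hypothesis at \<open>l\<close>, which lies
  in \<open>\<F>\<close> because \<open>\<F>\<close> is closed under divisors.\<close>

lemma ring_cong_trans:
  "ring_cong x y m \<Longrightarrow> ring_cong y z m \<Longrightarrow> ring_cong x z m"
  unfolding ring_cong_def by (metis diff_add_cancel add_diff_eq dvd_add)

lemma ring_cong_mult_left:
  "ring_cong x y m \<Longrightarrow> ring_cong (c * x) (c * y) m"
  unfolding ring_cong_def by (metis dvd_mult right_diff_distrib)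

lemma ring_cong_dvd_modulus:
  "ring_cong x y m \<Longrightarrow> n dvd m \<Longrightarrow> ring_cong x y n"
  unfolding ring_cong_def using dvd_trans by blast

lemma Lucasian_dvd_mult:
  fixes s :: "nat \<Rightarrow> 'a::comm_ring_1"
  assumes "Lucasian s" and "s 0 = 0"
  shows "s k dvd s (j * k)"
proof (induction j)
  case 0
  then show ?case using \<open>s 0 = 0\<close> by simp
next
  case (Suc j)
  have "s (j * k) * s k dvd s (j * k + k) - (s (j * k) + s k)"
    using \<open>Lucasian s\<close> unfolding Lucasian_def ring_cong_def by blast
  then have "s k dvd s (j * k + k) - (s (j * k) + s k)"
    using dvd_mult_right by blast
  moreover have "s k dvd s (j * k) + s k"
    using Suc by simp
  ultimately have "s k dvd s (j * k + k)"
    by (metis diff_add_cancel dvd_add)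
  then show ?case by (simp add: add.commute)
qed

lemma Lucasian_dvd_of_dvd:
  fixes s :: "nat \<Rightarrow> 'a::comm_ring_1"
  assumes "Lucasian s" and "s 0 = 0" and "k dvd n"
  shows "s k dvd s n"
  using assms Lucasian_dvd_mult by (metis dvdE mult.commute)

lemma Lucasian_cong_mult:
  fixes s :: "nat \<Rightarrow> 'a::comm_ring_1"
  assumes "Lucasian s" and "s 0 = 0"
  shows "ring_cong (s (j * l)) (of_nat j * s l) (s l * s l)"
proof (induction j)
  case 0
  then show ?case using \<open>s 0 = 0\<close> by (simp add: ring_cong_def)
next
  case (Suc j)
  have "ring_cong (s (j * l + l)) (s (j * l) + s l) (s (j * l) * s l)"
    using \<open>Lucasian s\<close> unfolding Lucasian_def by blast
  moreover have "s l * s l dvd s (j * l) * s l"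
    using Lucasian_dvd_mult[OF assms] by (simp add: mult_dvd_mono)
  ultimately have "ring_cong (s (j * l + l)) (s (j * l) + s l) (s l * s l)"
    by (rule ring_cong_dvd_modulus)
  moreover have "ring_cong (s (j * l) + s l) (of_nat (Suc j) * s l) (s l * s l)"
    using Suc by (simp add: ring_cong_def algebra_simps)
  ultimately show ?case
    by (simp add: add.commute ring_cong_trans)
qed

lemma Lucasian_cong_multiple_lcm:
  fixes s :: "nat \<Rightarrow> 'a::comm_ring_1"
  assumes "Lucasian s" and "s 0 = 0"
    and "ring_cong (s (lcm a b)) q (s a * s b)"
  shows "ring_cong (s (j * lcm a b)) (of_nat j * q) (s a * s b)"
proof -
  let ?l = "lcm a b"
  have "s a * s b dvd s ?l * s ?l"
    using Lucasian_dvd_of_dvd[OF assms(1,2)] by (simp add: mult_dvd_mono)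
  then have "ring_cong (s (j * ?l)) (of_nat j * s ?l) (s a * s b)"
    using Lucasian_cong_mult[OF assms(1,2)] ring_cong_dvd_modulus by blast
  moreover have "ring_cong (of_nat j * s ?l) (of_nat j * q) (s a * s b)"
    using assms(3) by (rule ring_cong_mult_left)
  ultimately show ?thesis by (rule ring_cong_trans)
qed

theorem corollary5p12:
  fixes s :: "nat \<Rightarrow> 'a::comm_ring_1" and F :: "nat set"
  assumes "GNS s" and "Lucasian s"
    and "\<forall>m\<in>F. 0 < m"
    and "\<forall>m\<in>F. \<forall>d. 0 < d \<and> d dvd m \<longrightarrow> d \<in> F"
    and "\<forall>a b. 0 < a \<and> 0 < b \<and> lcm a b \<in> F \<longrightarrow>
           ring_cong (s (lcm a b)) (gns_quot s a b) (s a * s b)"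
  shows "F_Green F s"
  unfolding F_Green_def
proof (intro ballI allI impI)
  fix m a b
  assume "m \<in> F" and ab: "a dvd m \<and> b dvd m"
  have "s 0 = 0" using \<open>GNS s\<close> unfolding GNS_def by simp
  have "0 < m" using assms(3) \<open>m \<in> F\<close> by blast
  then have "0 < a" "0 < b" using ab by (auto intro: gr0I)
  have "lcm a b dvd m" using ab by simp
  then have "lcm a b \<in> F"
    using assms(4) \<open>m \<in> F\<close> \<open>0 < a\<close> \<open>0 < b\<close> by (simp add: lcm_pos_nat)
  then have "ring_cong (s (lcm a b)) (gns_quot s a b) (s a * s b)"
    using assms(5) \<open>0 < a\<close> \<open>0 < b\<close> by blast
  from Lucasian_cong_multiple_lcm[OF \<open>Lucasian s\<close> \<open>s 0 = 0\<close> this, of "m div lcm a b"]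
  show "ring_cong (s m) (of_nat (m div lcm a b) * gns_quot s a b) (s a * s b)"
    using \<open>lcm a b dvd m\<close> by simp
qed

end
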